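(* Let $\epsilon$ be real and, for $i=1,2,3$, let $\alpha_i,\beta_i,\eta_i$ be real constants with $\beta_i^2=e^{\alpha_i\epsilon}+e^{-\alpha_i\epsilon}-2$. Assume $P(p_i+p_j)\neq0$ for $i<j$ and set $A(i,j)=-\dfrac{P(p_i-p_j)}{P(p_i+p_j)}$. Then $$f(x,t)=1+\sum_{i=1}^3 e^{\theta_i}+\sum_{1\le i<j\le 3}A(i,j)e^{\theta_i+\theta_j}+A(1,2)A(1,3)A(2,3)\,e^{\theta_1+\theta_2+\theta_3},\qquad \theta_i=-\frac{\alpha_i}{x}+\beta_i t+\eta_i,$$ satisfies the bilinear generalized $q$-Toda equation $\big[D_t^2-\big(e^{\epsilon x^2D_x}+e^{-\epsilon x^2 D_x}-2\big)\big]f\cdot f=0$.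
   Context: Hirota operators: $P(D_x,D_t)\,f\cdot g := P(\partial_x-\partial_{x'},\partial_t-\partial_{t'})f(x,t)g(x',t')|_{x'=x,t'=t}$; $e^{\pm\epsilon x^2 D_x} f\cdot g$ means $f\!\left(\frac{x}{1\mp\epsilon x}\right)g\!\left(\frac{x}{1\pm\epsilon x}\right)$. For a vector $p=(\beta,\alpha,\eta)$ define $P(p)=\beta^2-\big(e^{\alpha\epsilon}+e^{-\alpha\epsilon}-2\big)$, and $p_i=(\beta_i,\alpha_i,\eta_i)$ with componentwise sums and differences. *)

theory Defs
  imports "HOL-Analysis.Analysis"
begin

type_synonym pvec = "real \<times> real \<times> real"   (* p = (beta, alpha, eta) *)

definition padd :: "pvec \<Rightarrow> pvec \<Rightarrow> pvec" where
  "padd p q = (fst p + fst q, fst (snd p) + fst (snd q), snd (snd p) + snd (snd q))"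

definition psub :: "pvec \<Rightarrow> pvec \<Rightarrow> pvec" where
  "psub p q = (fst p - fst q, fst (snd p) - fst (snd q), snd (snd p) - snd (snd q))"

definition Ppoly :: "real \<Rightarrow> pvec \<Rightarrow> real" where
  "Ppoly eps p = (fst p)^2 - (exp (fst (snd p) * eps) + exp (- (fst (snd p) * eps)) - 2)"

text \<open>Hirota D_t^2 f.g at (x,t): (d_t - d_t')^2 f(x,t) g(x,t') at t'=t, written out.\<close>
definition hirota_Dt2 :: "(real \<Rightarrow> real \<Rightarrow> real) \<Rightarrow> (real \<Rightarrow> real \<Rightarrow> real) \<Rightarrow> real \<Rightarrow> real \<Rightarrow> real" where
  "hirota_Dt2 f g x t =
     deriv (deriv (\<lambda>s. f x s)) t * g x t
     - 2 * deriv (\<lambda>s. f x s) t * deriv (\<lambda>s. g x s) t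
     + f x t * deriv (deriv (\<lambda>s. g x s)) t"

text \<open>exp(eps x^2 D_x) f.g = f(x/(1-eps x)) g(x/(1+eps x)); exp(-eps x^2 D_x) f.g = f(x/(1+eps x)) g(x/(1-eps x)).\<close>
definition qshift_plus :: "real \<Rightarrow> (real \<Rightarrow> real \<Rightarrow> real) \<Rightarrow> (real \<Rightarrow> real \<Rightarrow> real) \<Rightarrow> real \<Rightarrow> real \<Rightarrow> real" where
  "qshift_plus eps f g x t = f (x / (1 - eps * x)) t * g (x / (1 + eps * x)) t"

definition qshift_minus :: "real \<Rightarrow> (real \<Rightarrow> real \<Rightarrow> real) \<Rightarrow> (real \<Rightarrow> real \<Rightarrow> real) \<Rightarrow> real \<Rightarrow> real \<Rightarrow> real" where
  "qshift_minus eps f g x t = f (x / (1 + eps * x)) t * g (x / (1 - eps * x)) t"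

definition qToda_bilinear :: "real \<Rightarrow> (real \<Rightarrow> real \<Rightarrow> real) \<Rightarrow> real \<Rightarrow> real \<Rightarrow> real" where
  "qToda_bilinear eps f x t =
     hirota_Dt2 f f x t - (qshift_plus eps f f x t + qshift_minus eps f f x t - 2 * (f x t * f x t))"

definition pv :: "(nat \<Rightarrow> real) \<Rightarrow> (nat \<Rightarrow> real) \<Rightarrow> (nat \<Rightarrow> real) \<Rightarrow> nat \<Rightarrow> pvec" where
  "pv \<alpha> \<beta> \<eta> i = (\<beta> i, \<alpha> i, \<eta> i)"

definition Acoef :: "real \<Rightarrow> (nat \<Rightarrow> real) \<Rightarrow> (nat \<Rightarrow> real) \<Rightarrow> (nat \<Rightarrow> real) \<Rightarrow> nat \<Rightarrow> nat \<Rightarrow> real" where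
  "Acoef eps \<alpha> \<beta> \<eta> i j =
     - Ppoly eps (psub (pv \<alpha> \<beta> \<eta> i) (pv \<alpha> \<beta> \<eta> j)) / Ppoly eps (padd (pv \<alpha> \<beta> \<eta> i) (pv \<alpha> \<beta> \<eta> j))"

definition theta :: "(nat \<Rightarrow> real) \<Rightarrow> (nat \<Rightarrow> real) \<Rightarrow> (nat \<Rightarrow> real) \<Rightarrow> nat \<Rightarrow> real \<Rightarrow> real \<Rightarrow> real" where
  "theta \<alpha> \<beta> \<eta> i x t = - \<alpha> i / x + \<beta> i * t + \<eta> i"

definition three_soliton :: "real \<Rightarrow> (nat \<Rightarrow> real) \<Rightarrow> (nat \<Rightarrow> real) \<Rightarrow> (nat \<Rightarrow> real) \<Rightarrow> real \<Rightarrow> real \<Rightarrow> real" where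
  "three_soliton eps \<alpha> \<beta> \<eta> x t =
     1 + (\<Sum>i\<in>{1..3::nat}. exp (theta \<alpha> \<beta> \<eta> i x t))
       + (\<Sum>(i,j)\<in>{(i,j). 1 \<le> i \<and> i < j \<and> j \<le> (3::nat)}.
            Acoef eps \<alpha> \<beta> \<eta> i j * exp (theta \<alpha> \<beta> \<eta> i x t + theta \<alpha> \<beta> \<eta> j x t))
       + Acoef eps \<alpha> \<beta> \<eta> 1 2 * Acoef eps \<alpha> \<beta> \<eta> 1 3 * Acoef eps \<alpha> \<beta> \<eta> 2 3
           * exp (theta \<alpha> \<beta> \<eta> 1 x t + theta \<alpha> \<beta> \<eta> 2 x t + theta \<alpha> \<beta> \<eta> 3 x t)"

end

theory Submission
  imports Defs
begin

(*
  1. For any family of exponential modes c_k e^{theta_k} with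
     theta_k = -alpha_k/x + beta_k t + eta_k, the bilinear q-Toda operator acts
     diagonally: [D_t^2 - (e^{eps x^2 D_x} + e^{-eps x^2 D_x} - 2)] f.f equals
     sum_{k,l} c_k c_l P(p_k - p_l) e^{theta_k + theta_l}.
  2. For the three-soliton ansatz (modes indexed by m in {0,1}^3 with p_m = sum m_i p_i)
     this double sum vanishes for ANY even function P satisfying Hirota's conditions:
     P(0) = P(p_i) = 0, the pair conditions A_ij P(p_i+p_j) + P(p_i-p_j) = 0 and the
     three-soliton condition.  This is a finite computation grouping the 64 terms.
  3. For the q-Toda dispersion function P the three-soliton condition is the one
     non-trivial input.  Writing e^{alpha_i eps} = s_i^2, beta_i = s_i - 1/s_i (possible
     by the dispersion relation) turns it into a rational identity in s_1, s_2, s_3.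
*)

section \<open>Hirota's bilinear form on sums of exponentials\<close>

definition phase :: "pvec \<Rightarrow> real \<Rightarrow> real \<Rightarrow> real" where
  "phase p x t = - fst (snd p) / x + fst p * t + snd (snd p)"

lemma phase_qshift:
  assumes "x \<noteq> 0" "1 - eps * x \<noteq> 0" "1 + eps * x \<noteq> 0"
  shows "phase p (x / (1 - eps * x)) t = phase p x t + fst (snd p) * eps"
    and "phase p (x / (1 + eps * x)) t = phase p x t - fst (snd p) * eps"
  using assms by (simp_all add: phase_def field_simps)

lemma hirota_exp_sum:
  fixes I :: "'i set" and c :: "'i \<Rightarrow> real" and q :: "'i \<Rightarrow> pvec"
  assumes x: "x \<noteq> 0" "1 - eps * x \<noteq> 0" "1 + eps * x \<noteq> 0"
  shows "qToda_bilinear eps (\<lambda>y s. \<Sum>k\<in>I. c k * exp (phase (q k) y s)) x t =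
    (\<Sum>k\<in>I. \<Sum>l\<in>I. (c k * exp (phase (q k) x t)) * (c l * exp (phase (q l) x t))
                       * Ppoly eps (psub (q k) (q l)))"
proof -
  define E where "E k = c k * exp (phase (q k) x t)" for k
  define b where "b k = fst (q k)" for k
  define a where "a k = fst (snd (q k))" for k
  have dphase: "(phase (q k) x has_real_derivative b k) (at s)" for k s
    unfolding phase_def b_def by (auto intro!: derivative_eq_intros)
  have dE: "((\<lambda>s. c k * exp (phase (q k) x s)) has_real_derivative
              b k * (c k * exp (phase (q k) x s))) (at s)" for k s
    by (auto intro!: derivative_eq_intros dphase)
  have d1: "deriv (\<lambda>s. \<Sum>k\<in>I. c k * exp (phase (q k) x s))
            = (\<lambda>s. \<Sum>k\<in>I. b k * (c k * exp (phase (q k) x s)))"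
    using dE by (intro ext DERIV_imp_deriv DERIV_sum) auto
  have d2: "deriv (\<lambda>s. \<Sum>k\<in>I. b k * (c k * exp (phase (q k) x s)))
            = (\<lambda>s. \<Sum>k\<in>I. b k ^ 2 * (c k * exp (phase (q k) x s)))"
    using dE by (intro ext DERIV_imp_deriv DERIV_sum)
      (auto intro!: derivative_eq_intros dphase simp: power2_eq_square)
  have shift: "c k * exp (phase (q k) (x / (1 - eps * x)) t) = E k * exp (a k * eps)"
    "c k * exp (phase (q k) (x / (1 + eps * x)) t) = E k * exp (- (a k * eps))" for k
    unfolding E_def a_def phase_qshift[OF x] by (simp_all add: exp_add exp_diff exp_minus field_simps)
  have pair: "b k ^ 2 * E k * E l - 2 * (b k * E k) * (b l * E l) + E k * (b l ^ 2 * E l)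
      - (E k * exp (a k * eps) * (E l * exp (- (a l * eps)))
         + E k * exp (- (a k * eps)) * (E l * exp (a l * eps)) - 2 * (E k * E l))
    = E k * E l * Ppoly eps (psub (q k) (q l))" for k l
    by (simp add: Ppoly_def psub_def a_def b_def left_diff_distrib exp_diff exp_minus
        field_simps power2_eq_square)
  show ?thesis
    unfolding qToda_bilinear_def hirota_Dt2_def qshift_plus_def qshift_minus_def d1 d2 shift
    by (simp add: E_def[symmetric] sum_product sum_distrib_left sum_distrib_right
        sum_subtractf[symmetric] sum.distrib[symmetric] pair) (rule sum.swap)
qed

section \<open>Hirota's three-soliton cancellation\<close>

definition modes :: "(nat \<times> nat \<times> nat) set" where
  "modes = {0,1} \<times> {0,1} \<times> {0,1}"

definition weight :: "real \<Rightarrow> real \<Rightarrow> real \<Rightarrow> real \<Rightarrow> real \<Rightarrow> real \<Rightarrow> nat \<times> nat \<times> nat \<Rightarrow> real" where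
  "weight A12 A13 A23 e1 e2 e3 m = (case m of (m1, m2, m3) \<Rightarrow>
     A12 ^ (m1 * m2) * A13 ^ (m1 * m3) * A23 ^ (m2 * m3) * e1 ^ m1 * e2 ^ m2 * e3 ^ m3)"

lemma sum_modes:
  "(\<Sum>m\<in>modes. f m) = f (0,0,0) + f (0,0,1) + f (0,1,0) + f (0,1,1)
                      + f (1,0,0) + f (1,0,1) + f (1,1,0) + f (1,1,1)"
  unfolding modes_def by (simp add: sum.cartesian_product[symmetric] algebra_simps)

text \<open>Grouping the 64 terms by monomial in \<open>e\<^sub>1, e\<^sub>2, e\<^sub>3\<close>, every coefficient is a multiple of
  one of these conditions; only \<open>e\<^sub>1e\<^sub>2e\<^sub>3\<close> involves the triple condition.\<close>

lemma three_soliton_cancellation: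
  fixes P :: "real \<Rightarrow> real \<Rightarrow> real \<Rightarrow> real" and A12 A13 A23 e1 e2 e3 :: real
  assumes even: "\<And>u v w. P (-u) (-v) (-w) = P u v w"
    and vacuum: "P 0 0 0 = 0"
    and single: "P 1 0 0 = 0" "P 0 1 0 = 0" "P 0 0 1 = 0"
    and pair: "A12 * P 1 1 0 + P 1 (-1) 0 = 0" "A13 * P 1 0 1 + P 1 0 (-1) = 0"
              "A23 * P 0 1 1 + P 0 1 (-1) = 0"
    and triple: "A12 * A13 * A23 * P 1 1 1 + A12 * P 1 1 (-1) + A13 * P 1 (-1) 1
                 + A23 * P (-1) 1 1 = 0"
  shows "(\<Sum>m\<in>modes. \<Sum>n\<in>modes.
            weight A12 A13 A23 e1 e2 e3 m * weight A12 A13 A23 e1 e2 e3 n *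
            P (real (fst m) - real (fst n)) (real (fst (snd m)) - real (fst (snd n)))
              (real (snd (snd m)) - real (snd (snd n)))) = 0"
proof -
  have flip: "P (-1) 0 0 = 0" "P 0 (-1) 0 = 0" "P 0 0 (-1) = 0"
      "P (-1) (-1) 0 = P 1 1 0" "P (-1) 0 (-1) = P 1 0 1" "P 0 (-1) (-1) = P 0 1 1"
      "P (-1) 1 0 = P 1 (-1) 0" "P (-1) 0 1 = P 1 0 (-1)" "P 0 (-1) 1 = P 0 1 (-1)"
      "P (-1) (-1) (-1) = P 1 1 1" "P (-1) (-1) 1 = P 1 1 (-1)" "P (-1) 1 (-1) = P 1 (-1) 1"
      "P 1 (-1) (-1) = P (-1) 1 1"
    using even[of 1 0 0] even[of 0 1 0] even[of 0 0 1] even[of 1 1 0] even[of 1 0 1]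
      even[of 0 1 1] even[of 1 "-1" 0] even[of 1 0 "-1"] even[of 0 1 "-1"] even[of 1 1 1]
      even[of 1 1 "-1"] even[of 1 "-1" 1] even[of "-1" 1 1] single by simp_all
  have phase_shift: "P 1 (-1) 0 = - A12 * P 1 1 0" "P 1 0 (-1) = - A13 * P 1 0 1"
      "P 0 1 (-1) = - A23 * P 0 1 1"
    using pair by algebra+
  show ?thesis
    unfolding sum_modes weight_def
    by (simp add: flip phase_shift vacuum single) (use triple in algebra)
qed

section \<open>The q-Toda dispersion function in multiplicative variables\<close>

text \<open>A mode whose multiplier \<open>s\<close> satisfies \<open>s\<^sup>2 = e\<^sup>\<alpha>\<^sup>\<epsilon>\<close> has velocity \<open>\<beta> = s - 1/s\<close>,
  and the dispersion function becomes a difference of two squares.\<close>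

definition qbeta :: "real \<Rightarrow> real" where
  "qbeta s = s - 1 / s"

definition qdisp :: "real \<Rightarrow> real \<Rightarrow> real" where
  "qdisp b m = b\<^sup>2 - (m - 1 / m)\<^sup>2"

lemma Ppoly_qdisp:
  assumes "m\<^sup>2 = exp (a * eps)"
  shows "Ppoly eps (b, a, h) = qdisp b m"
proof -
  have m: "m \<noteq> 0"
    using assms by (metis exp_not_eq_zero power_zero_numeral)
  have "exp (- (a * eps)) = 1 / m\<^sup>2"
    using assms by (simp add: exp_minus inverse_eq_divide)
  then have "Ppoly eps (b, a, h) = b\<^sup>2 - (m\<^sup>2 + 1 / m\<^sup>2 - 2)"
    using assms by (simp add: Ppoly_def)
  also have "\<dots> = qdisp b m"
    using m by (simp add: qdisp_def power2_diff power2_eq_square field_simps)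
  finally show ?thesis .
qed

lemma dispersion_param:
  assumes "b\<^sup>2 = exp (a * eps) + exp (- (a * eps)) - 2"
  obtains s :: real where "s\<^sup>2 = exp (a * eps)" "b = qbeta s"
proof -
  define r where "r = exp (a * eps / 2)"
  have r: "r > 0" "r\<^sup>2 = exp (a * eps)"
    by (simp_all add: r_def power2_eq_square exp_add[symmetric])
  have "b\<^sup>2 = (r - 1 / r)\<^sup>2"
    using assms r by (simp add: exp_minus power2_diff power2_eq_square field_simps)
  then have "b = r - 1 / r \<or> b = (- r) - 1 / (- r)"
    by (auto simp: power2_eq_iff)
  then show ?thesis
    using r that[of r] that[of "- r"] by (auto simp: qbeta_def)
qed

lemma qdisp_pair:
  fixes x y :: real
  assumes "x \<noteq> 0" "y \<noteq> 0"
  shows "qdisp (qbeta x + qbeta y) (x * y)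
           = - (x*y - 1)\<^sup>2 * ((x\<^sup>2 - 1) * (y\<^sup>2 - 1) / (x\<^sup>2 * y\<^sup>2))"
    and "qdisp (qbeta x - qbeta y) (x / y)
           = (x - y)\<^sup>2 * ((x\<^sup>2 - 1) * (y\<^sup>2 - 1) / (x\<^sup>2 * y\<^sup>2))"
  using assms unfolding qdisp_def qbeta_def by (simp_all add: field_simps) algebra+

lemma Acoef_param:
  assumes x: "x\<^sup>2 = exp (\<alpha> i * eps)" "\<beta> i = qbeta x"
    and y: "y\<^sup>2 = exp (\<alpha> j * eps)" "\<beta> j = qbeta y"
    and nz: "Ppoly eps (padd (pv \<alpha> \<beta> \<eta> i) (pv \<alpha> \<beta> \<eta> j)) \<noteq> 0"
  shows "x * y \<noteq> 1" and "Acoef eps \<alpha> \<beta> \<eta> i j = (x - y)\<^sup>2 / (x * y - 1)\<^sup>2"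
proof -
  have x0: "x \<noteq> 0" and y0: "y \<noteq> 0"
    using x(1) y(1) by (metis exp_not_eq_zero power_zero_numeral)+
  have "Ppoly eps (padd (pv \<alpha> \<beta> \<eta> i) (pv \<alpha> \<beta> \<eta> j)) = qdisp (qbeta x + qbeta y) (x * y)"
    unfolding padd_def pv_def fst_conv snd_conv x(2) y(2)
    by (rule Ppoly_qdisp) (simp add: distrib_right exp_add power_mult_distrib x(1) y(1))
  also have "\<dots> = - (x*y - 1)\<^sup>2 * ((x\<^sup>2 - 1) * (y\<^sup>2 - 1) / (x\<^sup>2 * y\<^sup>2))"
    using x0 y0 by (rule qdisp_pair)
  finally have sum: "Ppoly eps (padd (pv \<alpha> \<beta> \<eta> i) (pv \<alpha> \<beta> \<eta> j)) = \<dots>" .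
  have "Ppoly eps (psub (pv \<alpha> \<beta> \<eta> i) (pv \<alpha> \<beta> \<eta> j)) = qdisp (qbeta x - qbeta y) (x / y)"
    unfolding psub_def pv_def fst_conv snd_conv x(2) y(2)
    by (rule Ppoly_qdisp) (simp add: left_diff_distrib exp_diff power_divide x(1) y(1))
  also have "\<dots> = (x - y)\<^sup>2 * ((x\<^sup>2 - 1) * (y\<^sup>2 - 1) / (x\<^sup>2 * y\<^sup>2))"
    using x0 y0 by (rule qdisp_pair)
  finally have diff: "Ppoly eps (psub (pv \<alpha> \<beta> \<eta> i) (pv \<alpha> \<beta> \<eta> j)) = \<dots>" .
  have "(x*y - 1)\<^sup>2 \<noteq> 0" "(x\<^sup>2 - 1) * (y\<^sup>2 - 1) / (x\<^sup>2 * y\<^sup>2) \<noteq> 0"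
    using nz unfolding sum by auto
  then show "x * y \<noteq> 1" and "Acoef eps \<alpha> \<beta> \<eta> i j = (x - y)\<^sup>2 / (x * y - 1)\<^sup>2"
    by (simp_all add: Acoef_def sum diff)
qed

text \<open>The three-soliton condition in multiplicative variables: after putting the four
  dispersion values over the common denominator \<open>x\<^sup>2y\<^sup>2z\<^sup>2\<close> it is a polynomial identity.\<close>

lemma triple_identity:
  fixes x y z :: real
  assumes x: "x \<noteq> 0" and y: "y \<noteq> 0" and z: "z \<noteq> 0"
    and xy: "x * y \<noteq> 1" and xz: "x * z \<noteq> 1" and yz: "y * z \<noteq> 1"
  defines "A \<equiv> \<lambda>u v::real. (u - v)\<^sup>2 / (u * v - 1)\<^sup>2"
  shows "A x y * A x z * A y z * qdisp (qbeta x + qbeta y + qbeta z) (x * y * z)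
       + A x y * qdisp (qbeta x + qbeta y - qbeta z) (x * y / z)
       + A x z * qdisp (qbeta x - qbeta y + qbeta z) (x * z / y)
       + A y z * qdisp (- qbeta x + qbeta y + qbeta z) (y * z / x) = 0"
proof -
  define m where "m = x\<^sup>2 * y\<^sup>2 * z\<^sup>2"
  define u where "u = (x\<^sup>2 - 1) * y * z"
  define v where "v = (y\<^sup>2 - 1) * x * z"
  define w where "w = (z\<^sup>2 - 1) * x * y"
  have P1: "qdisp (qbeta x + qbeta y + qbeta z) (x * y * z)
            = ((u + v + w)\<^sup>2 - (x\<^sup>2 * y\<^sup>2 * z\<^sup>2 - 1)\<^sup>2) / m"
    using x y z unfolding qdisp_def qbeta_def m_def u_def v_def w_def
    by (simp add: field_simps) algebra
  have P2: "qdisp (qbeta x + qbeta y - qbeta z) (x * y / z)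
            = ((u + v - w)\<^sup>2 - (x\<^sup>2 * y\<^sup>2 - z\<^sup>2)\<^sup>2) / m"
    using x y z unfolding qdisp_def qbeta_def m_def u_def v_def w_def
    by (simp add: field_simps) algebra
  have P3: "qdisp (qbeta x - qbeta y + qbeta z) (x * z / y)
            = ((u - v + w)\<^sup>2 - (x\<^sup>2 * z\<^sup>2 - y\<^sup>2)\<^sup>2) / m"
    using x y z unfolding qdisp_def qbeta_def m_def u_def v_def w_def
    by (simp add: field_simps) algebra
  have P4: "qdisp (- qbeta x + qbeta y + qbeta z) (y * z / x)
            = ((- u + v + w)\<^sup>2 - (y\<^sup>2 * z\<^sup>2 - x\<^sup>2)\<^sup>2) / m"
    using x y z unfolding qdisp_def qbeta_def m_def u_def v_def w_def
    by (simp add: field_simps) algebra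
  have numerator:
    "(x-y)\<^sup>2 * (x-z)\<^sup>2 * (y-z)\<^sup>2 * ((u + v + w)\<^sup>2 - (x\<^sup>2 * y\<^sup>2 * z\<^sup>2 - 1)\<^sup>2)
     + (x-y)\<^sup>2 * (x*z-1)\<^sup>2 * (y*z-1)\<^sup>2 * ((u + v - w)\<^sup>2 - (x\<^sup>2 * y\<^sup>2 - z\<^sup>2)\<^sup>2)
     + (x-z)\<^sup>2 * (x*y-1)\<^sup>2 * (y*z-1)\<^sup>2 * ((u - v + w)\<^sup>2 - (x\<^sup>2 * z\<^sup>2 - y\<^sup>2)\<^sup>2)
     + (y-z)\<^sup>2 * (x*y-1)\<^sup>2 * (x*z-1)\<^sup>2 * ((- u + v + w)\<^sup>2 - (y\<^sup>2 * z\<^sup>2 - x\<^sup>2)\<^sup>2) = 0"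
    unfolding u_def v_def w_def by algebra
  have combine: "\<And>n1 n2 n3 d1 d2 d3 q1 q2 q3 q4 :: real. d1 \<noteq> 0 \<Longrightarrow> d2 \<noteq> 0 \<Longrightarrow> d3 \<noteq> 0 \<Longrightarrow>
      (n1/d1) * (n2/d2) * (n3/d3) * (q1/m) + (n1/d1) * (q2/m) + (n2/d2) * (q3/m) + (n3/d3) * (q4/m)
      = (n1*n2*n3*q1 + n1*d2*d3*q2 + n2*d1*d3*q3 + n3*d1*d2*q4) / (d1*d2*d3*m)"
    using x y z by (simp add: m_def field_simps)
  have denominators: "(x*y - 1)\<^sup>2 \<noteq> 0" "(x*z - 1)\<^sup>2 \<noteq> 0" "(y*z - 1)\<^sup>2 \<noteq> 0"
    using xy xz yz by auto
  show ?thesis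
    unfolding P1 P2 P3 P4 A_def combine[OF denominators] using numerator by simp
qed

definition pcomb :: "(nat \<Rightarrow> real) \<Rightarrow> (nat \<Rightarrow> real) \<Rightarrow> (nat \<Rightarrow> real) \<Rightarrow> real \<Rightarrow> real \<Rightarrow> real \<Rightarrow> pvec" where
  "pcomb \<alpha> \<beta> \<eta> u v w =
     (u * \<beta> 1 + v * \<beta> 2 + w * \<beta> 3, u * \<alpha> 1 + v * \<alpha> 2 + w * \<alpha> 3, u * \<eta> 1 + v * \<eta> 2 + w * \<eta> 3)"

lemma qtoda_three_condition:
  fixes eps :: real and \<alpha> \<beta> \<eta> :: "nat \<Rightarrow> real"
  assumes disp: "\<And>i. i \<in> {1..3} \<Longrightarrow> (\<beta> i)\<^sup>2 = exp (\<alpha> i * eps) + exp (- (\<alpha> i * eps)) - 2"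
    and nz: "\<And>i j. 1 \<le> i \<Longrightarrow> i < j \<Longrightarrow> j \<le> 3 \<Longrightarrow>
               Ppoly eps (padd (pv \<alpha> \<beta> \<eta> i) (pv \<alpha> \<beta> \<eta> j)) \<noteq> 0"
  defines "A \<equiv> Acoef eps \<alpha> \<beta> \<eta>" and "P \<equiv> \<lambda>u v w. Ppoly eps (pcomb \<alpha> \<beta> \<eta> u v w)"
  shows "A 1 2 * A 1 3 * A 2 3 * P 1 1 1 + A 1 2 * P 1 1 (-1) + A 1 3 * P 1 (-1) 1
         + A 2 3 * P (-1) 1 1 = 0"
proof -
  obtain x where x: "x\<^sup>2 = exp (\<alpha> 1 * eps)" "\<beta> 1 = qbeta x"
    by (rule dispersion_param[OF disp[of 1]]) auto
  obtain y where y: "y\<^sup>2 = exp (\<alpha> 2 * eps)" "\<beta> 2 = qbeta y"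
    by (rule dispersion_param[OF disp[of 2]]) auto
  obtain z where z: "z\<^sup>2 = exp (\<alpha> 3 * eps)" "\<beta> 3 = qbeta z"
    by (rule dispersion_param[OF disp[of 3]]) auto
  have nonzero: "x \<noteq> 0" "y \<noteq> 0" "z \<noteq> 0"
    using x(1) y(1) z(1) by (metis exp_not_eq_zero power_zero_numeral)+
  have comb: "P u v w = qdisp (u * qbeta x + v * qbeta y + w * qbeta z) m"
    if "m\<^sup>2 = exp (u * \<alpha> 1 * eps) * exp (v * \<alpha> 2 * eps) * exp (w * \<alpha> 3 * eps)" for u v w m
    unfolding P_def pcomb_def x(2) y(2) z(2)
    by (rule Ppoly_qdisp) (simp add: that distrib_right exp_add)
  have exps: "exp (\<alpha> 1 * eps) = x\<^sup>2" "exp (\<alpha> 2 * eps) = y\<^sup>2" "exp (\<alpha> 3 * eps) = z\<^sup>2"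
    using x y z by simp_all
  have "P 1 1 1 = qdisp (qbeta x + qbeta y + qbeta z) (x * y * z)"
    using exps comb[where u=1 and v=1 and w=1 and m="x * y * z"]
    by (simp add: power_mult_distrib)
  moreover have "P 1 1 (-1) = qdisp (qbeta x + qbeta y - qbeta z) (x * y / z)"
    using exps comb[where u=1 and v=1 and w="-1" and m="x * y / z"]
    by (simp add: exp_minus power_mult_distrib power_divide divide_inverse power_inverse)
  moreover have "P 1 (-1) 1 = qdisp (qbeta x - qbeta y + qbeta z) (x * z / y)"
    using exps comb[where u=1 and v="-1" and w=1 and m="x * z / y"]
    by (simp add: exp_minus power_mult_distrib power_divide divide_inverse power_inverse)
  moreover have "P (-1) 1 1 = qdisp (- qbeta x + qbeta y + qbeta z) (y * z / x)"
    using exps comb[where u="-1" and v=1 and w=1 and m="y * z / x"]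
    by (simp add: exp_minus power_mult_distrib power_divide divide_inverse power_inverse)
  moreover have "x * y \<noteq> 1" "A 1 2 = (x - y)\<^sup>2 / (x * y - 1)\<^sup>2"
    using Acoef_param[OF x y nz[of 1 2]] by (simp_all add: A_def)
  moreover have "x * z \<noteq> 1" "A 1 3 = (x - z)\<^sup>2 / (x * z - 1)\<^sup>2"
    using Acoef_param[OF x z nz[of 1 3]] by (simp_all add: A_def)
  moreover have "y * z \<noteq> 1" "A 2 3 = (y - z)\<^sup>2 / (y * z - 1)\<^sup>2"
    using Acoef_param[OF y z nz[of 2 3]] by (simp_all add: A_def)
  ultimately show ?thesis
    using triple_identity[OF nonzero] by simp
qed

definition mode :: "(nat \<Rightarrow> real) \<Rightarrow> (nat \<Rightarrow> real) \<Rightarrow> (nat \<Rightarrow> real) \<Rightarrow> nat \<times> nat \<times> nat \<Rightarrow> pvec" where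
  "mode \<alpha> \<beta> \<eta> m = pcomb \<alpha> \<beta> \<eta> (real (fst m)) (real (fst (snd m))) (real (snd (snd m)))"

lemma phase_pcomb:
  "phase (pcomb \<alpha> \<beta> \<eta> u v w) x t
     = u * theta \<alpha> \<beta> \<eta> 1 x t + v * theta \<alpha> \<beta> \<eta> 2 x t + w * theta \<alpha> \<beta> \<eta> 3 x t"
  by (cases "x = 0") (simp_all add: phase_def pcomb_def theta_def field_simps)

lemma three_soliton_modes:
  "three_soliton eps \<alpha> \<beta> \<eta> = (\<lambda>y s. \<Sum>m\<in>modes.
     weight (Acoef eps \<alpha> \<beta> \<eta> 1 2) (Acoef eps \<alpha> \<beta> \<eta> 1 3) (Acoef eps \<alpha> \<beta> \<eta> 2 3) 1 1 1 m
     * exp (phase (mode \<alpha> \<beta> \<eta> m) y s))"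
proof -
  have pairs: "{(i, j). 1 \<le> i \<and> i < j \<and> j \<le> (3::nat)} = {(1,2), (1,3), (2,3)}"
    by auto
  have "{1..3::nat} = {1, 2, 3}"
    by auto
  then show ?thesis
    unfolding three_soliton_def pairs sum_modes weight_def mode_def phase_pcomb
    by (simp add: algebra_simps)
qed

lemma weight_mode:
  "weight A12 A13 A23 1 1 1 m * exp (phase (mode \<alpha> \<beta> \<eta> m) x t)
     = weight A12 A13 A23 (exp (theta \<alpha> \<beta> \<eta> 1 x t)) (exp (theta \<alpha> \<beta> \<eta> 2 x t))
         (exp (theta \<alpha> \<beta> \<eta> 3 x t)) m"
  by (cases m) (simp add: weight_def mode_def phase_pcomb exp_add exp_of_nat_mult)

lemma psub_mode:
  "psub (mode \<alpha> \<beta> \<eta> m) (mode \<alpha> \<beta> \<eta> n)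
     = pcomb \<alpha> \<beta> \<eta> (real (fst m) - real (fst n)) (real (fst (snd m)) - real (fst (snd n)))
         (real (snd (snd m)) - real (snd (snd n)))"
  by (simp add: psub_def mode_def pcomb_def algebra_simps)

lemma Ppoly_pcomb_even:
  "Ppoly eps (pcomb \<alpha> \<beta> \<eta> (-u) (-v) (-w)) = Ppoly eps (pcomb \<alpha> \<beta> \<eta> u v w)"
  by (simp add: Ppoly_def pcomb_def algebra_simps power2_eq_square)

lemma Acoef_phase_shift:
  assumes "Ppoly eps (padd (pv \<alpha> \<beta> \<eta> i) (pv \<alpha> \<beta> \<eta> j)) \<noteq> 0"
  shows "Acoef eps \<alpha> \<beta> \<eta> i j * Ppoly eps (padd (pv \<alpha> \<beta> \<eta> i) (pv \<alpha> \<beta> \<eta> j))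
         + Ppoly eps (psub (pv \<alpha> \<beta> \<eta> i) (pv \<alpha> \<beta> \<eta> j)) = 0"
  using assms by (simp add: Acoef_def)

lemma qtoda_three_soliton_sum:
  fixes eps :: real and \<alpha> \<beta> \<eta> :: "nat \<Rightarrow> real"
  assumes disp: "\<And>i. i \<in> {1..3} \<Longrightarrow> (\<beta> i)\<^sup>2 = exp (\<alpha> i * eps) + exp (- (\<alpha> i * eps)) - 2"
    and nz: "\<And>i j. 1 \<le> i \<Longrightarrow> i < j \<Longrightarrow> j \<le> 3 \<Longrightarrow>
               Ppoly eps (padd (pv \<alpha> \<beta> \<eta> i) (pv \<alpha> \<beta> \<eta> j)) \<noteq> 0"
  defines "A \<equiv> Acoef eps \<alpha> \<beta> \<eta>" and "P \<equiv> \<lambda>u v w. Ppoly eps (pcomb \<alpha> \<beta> \<eta> u v w)"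
  shows "(\<Sum>m\<in>modes. \<Sum>n\<in>modes. weight (A 1 2) (A 1 3) (A 2 3) e1 e2 e3 m
           * weight (A 1 2) (A 1 3) (A 2 3) e1 e2 e3 n
           * P (real (fst m) - real (fst n)) (real (fst (snd m)) - real (fst (snd n)))
               (real (snd (snd m)) - real (snd (snd n)))) = 0"
proof (rule three_soliton_cancellation)
  show "P (- u) (- v) (- w) = P u v w" for u v w
    unfolding P_def by (rule Ppoly_pcomb_even)
  show "P 0 0 0 = 0"
    by (simp add: P_def Ppoly_def pcomb_def)
  show "P 1 0 0 = 0" "P 0 1 0 = 0" "P 0 0 1 = 0"
    using disp[of 1] disp[of 2] disp[of 3] by (simp_all add: P_def Ppoly_def pcomb_def)
  show "A 1 2 * P 1 1 0 + P 1 (- 1) 0 = 0" "A 1 3 * P 1 0 1 + P 1 0 (- 1) = 0"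
    "A 2 3 * P 0 1 1 + P 0 1 (- 1) = 0"
    using Acoef_phase_shift[OF nz[of 1 2]] Acoef_phase_shift[OF nz[of 1 3]]
      Acoef_phase_shift[OF nz[of 2 3]]
    by (simp_all add: A_def P_def pcomb_def padd_def psub_def pv_def)
  show "A 1 2 * A 1 3 * A 2 3 * P 1 1 1 + A 1 2 * P 1 1 (- 1) + A 1 3 * P 1 (- 1) 1
        + A 2 3 * P (- 1) 1 1 = 0"
    unfolding A_def P_def using disp nz by (rule qtoda_three_condition)
qed

theorem mainTheorem4:
  fixes eps :: real and \<alpha> \<beta> \<eta> :: "nat \<Rightarrow> real"
  assumes disp: "\<And>i. i \<in> {1..3} \<Longrightarrow> (\<beta> i)^2 = exp (\<alpha> i * eps) + exp (- (\<alpha> i * eps)) - 2"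
    and nz: "\<And>i j. 1 \<le> i \<Longrightarrow> i < j \<Longrightarrow> j \<le> 3 \<Longrightarrow>
               Ppoly eps (padd (pv \<alpha> \<beta> \<eta> i) (pv \<alpha> \<beta> \<eta> j)) \<noteq> 0"
  shows "\<forall>x t. x \<noteq> 0 \<and> 1 - eps * x \<noteq> 0 \<and> 1 + eps * x \<noteq> 0 \<longrightarrow>
           qToda_bilinear eps (three_soliton eps \<alpha> \<beta> \<eta>) x t = 0"
proof (intro allI impI)
  fix x t :: real
  assume "x \<noteq> 0 \<and> 1 - eps * x \<noteq> 0 \<and> 1 + eps * x \<noteq> 0"
  then have x: "x \<noteq> 0" "1 - eps * x \<noteq> 0" "1 + eps * x \<noteq> 0"
    by auto
  have "qToda_bilinear eps (three_soliton eps \<alpha> \<beta> \<eta>) x t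
      = (\<Sum>m\<in>modes. \<Sum>n\<in>modes.
           weight (Acoef eps \<alpha> \<beta> \<eta> 1 2) (Acoef eps \<alpha> \<beta> \<eta> 1 3) (Acoef eps \<alpha> \<beta> \<eta> 2 3)
             (exp (theta \<alpha> \<beta> \<eta> 1 x t)) (exp (theta \<alpha> \<beta> \<eta> 2 x t)) (exp (theta \<alpha> \<beta> \<eta> 3 x t)) m
         * weight (Acoef eps \<alpha> \<beta> \<eta> 1 2) (Acoef eps \<alpha> \<beta> \<eta> 1 3) (Acoef eps \<alpha> \<beta> \<eta> 2 3)
             (exp (theta \<alpha> \<beta> \<eta> 1 x t)) (exp (theta \<alpha> \<beta> \<eta> 2 x t)) (exp (theta \<alpha> \<beta> \<eta> 3 x t)) n
         * Ppoly eps (pcomb \<alpha> \<beta> \<eta> (real (fst m) - real (fst n))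
             (real (fst (snd m)) - real (fst (snd n))) (real (snd (snd m)) - real (snd (snd n)))))"
    unfolding three_soliton_modes hirota_exp_sum[OF x]
    unfolding weight_mode psub_mode ..
  also have "\<dots> = 0"
    using disp nz by (rule qtoda_three_soliton_sum)
  finally show "qToda_bilinear eps (three_soliton eps \<alpha> \<beta> \<eta>) x t = 0" .
qed

end
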